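(* In the compulsory constrained two-facility location game described in the context, every deterministic strategyproof mechanism has approximation ratio at least $3$ under the sum cost objective.
   Context: An instance consists of $n$ agents with private locations $x_1,\dots,x_n\in\mathbb{R}$, each served by both facilities $F_1,F_2$, and a finite multiset $A=\{a_1\le\dots\le a_m\}$ of real alternative locations. A deterministic mechanism $f$ maps each instance (reported locations and $A$) to $(y_1,y_2)$ with $y_1\in A$, $y_2\in A\setminus\{y_1\}$ (one copy removed from the multiset). Agent $j$'s cost is $c_j(\mathbf{y},x_j)=\max\{|y_1-x_j|,|y_2-x_j|\}$; the sum cost is $sc(\mathbf{y},\mathbf{x})=\sum_j c_j(\mathbf{y},x_j)$. $f$ is strategyproof if no agent can strictly decrease her true cost by misreporting her own location, whatever the others report. The approximation ratio of $f$ is $\sup_{\text{instances}} sc(f(\mathbf{x}),\mathbf{x})/sc(OPT,\mathbf{x})$, where $OPT$ minimizes the sum cost over feasible outcomes. *)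

theory Defs
  imports Complex_Main "HOL-Library.Multiset" "HOL-Library.Extended_Real"
begin

definition feasible :: "real multiset \<Rightarrow> real \<times> real \<Rightarrow> bool" where
  "feasible A y \<longleftrightarrow> fst y \<in># A \<and> snd y \<in># A - {# fst y #}"

definition agent_cost :: "real \<times> real \<Rightarrow> real \<Rightarrow> real" where
  "agent_cost y x = max \<bar>fst y - x\<bar> \<bar>snd y - x\<bar>"

definition social_cost :: "real \<times> real \<Rightarrow> real list \<Rightarrow> real" where
  "social_cost y xs = (\<Sum>j<length xs. agent_cost y (xs ! j))"

definition opt_cost :: "real list \<Rightarrow> real multiset \<Rightarrow> real" where
  "opt_cost xs A = Min {social_cost y xs | y. feasible A y}"

definition valid_instance :: "real list \<Rightarrow> real multiset \<Rightarrow> bool" where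
  "valid_instance xs A \<longleftrightarrow> xs \<noteq> [] \<and> size A \<ge> 2"

definition is_mechanism :: "(real list \<Rightarrow> real multiset \<Rightarrow> real \<times> real) \<Rightarrow> bool" where
  "is_mechanism f \<longleftrightarrow> (\<forall>xs A. valid_instance xs A \<longrightarrow> feasible A (f xs A))"

definition strategyproof :: "(real list \<Rightarrow> real multiset \<Rightarrow> real \<times> real) \<Rightarrow> bool" where
  "strategyproof f \<longleftrightarrow>
     (\<forall>xs A i x'. valid_instance xs A \<longrightarrow> i < length xs \<longrightarrow>
        agent_cost (f xs A) (xs ! i) \<le> agent_cost (f (xs[i := x']) A) (xs ! i))"

text \<open>Ratio on one instance, with the conventions c/0 = \<infinity> for c > 0 and 0/0 = 1.\<close>
definition inst_ratio :: "real \<Rightarrow> real \<Rightarrow> ereal" where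
  "inst_ratio c opt = (if opt > 0 then ereal (c / opt) else if c = 0 then 1 else \<infinity>)"

definition approx_ratio :: "(real list \<Rightarrow> real multiset \<Rightarrow> real \<times> real) \<Rightarrow> ereal" where
  "approx_ratio f = (SUP p \<in> {(xs, A). valid_instance xs A}.
      inst_ratio (social_cost (f (fst p) (snd p)) (fst p)) (opt_cost (fst p) (snd p)))"

end

theory Submission
  imports Defs
begin

text \<open>Take the alternatives 0, 0, 2, 2 and two agents at 1 - t and 1 + t. If the mechanism
  puts both facilities at 2, the agent at 1 - t may report 0; by strategyproofness the outcome
  (0, 0) is then excluded, and every remaining outcome costs at least 3 - t at the profile
  (0, 1 + t), whereas (0, 0) costs 1 + t. Otherwise a facility sits at 0, and symmetrically the
  agent at 1 + t reporting 2 gives the ratio (3 - t) / (1 + t) at the profile (1 - t, 2).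
  Letting t tend to 0 gives the bound 3.\<close>

lemma social_cost_eq_sum_list: "social_cost y xs = (\<Sum>x\<leftarrow>xs. agent_cost y x)"
  by (simp add: social_cost_def sum_list_sum_nth atLeast0LessThan)

lemma agent_cost_nonneg: "0 \<le> agent_cost y x"
  by (simp add: agent_cost_def)

lemma dist_le_agent_cost_add: "\<bar>x - x'\<bar> \<le> agent_cost y x + agent_cost y x'"
  by (simp add: agent_cost_def)

lemma social_cost_pos:
  assumes "x \<in> set xs" "x' \<in> set xs" "x \<noteq> x'"
  shows "0 < social_cost y xs"
proof -
  have le_sum: "agent_cost y z \<le> social_cost y xs" if "z \<in> set xs" for z
    unfolding social_cost_eq_sum_list
    using that by (intro member_le_sum_list) (auto simp: agent_cost_nonneg)
  have "\<bar>x - x'\<bar> \<le> 2 * social_cost y xs"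
    using dist_le_agent_cost_add[of x x' y] le_sum[OF assms(1)] le_sum[OF assms(2)] by linarith
  then show ?thesis
    using assms(3) by simp
qed

lemma finite_feasible: "finite {y. feasible A y}"
proof (rule finite_subset)
  show "{y. feasible A y} \<subseteq> set_mset A \<times> set_mset A"
    by (auto simp: feasible_def dest: in_diffD)
qed simp

lemma finite_feasible_social_costs: "finite {social_cost y xs | y. feasible A y}"
proof -
  have "{social_cost y xs | y. feasible A y} = (\<lambda>y. social_cost y xs) ` {y. feasible A y}"
    by blast
  then show ?thesis
    using finite_feasible by simp
qed

lemma opt_cost_le:
  assumes "feasible A y"
  shows "opt_cost xs A \<le> social_cost y xs"
  unfolding opt_cost_def using assms by (intro Min_le finite_feasible_social_costs) blast

lemma opt_cost_attained:
  assumes "feasible A y\<^sub>0"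
  obtains y where "feasible A y" "opt_cost xs A = social_cost y xs"
proof -
  have "{social_cost y xs | y. feasible A y} \<noteq> {}"
    using assms by blast
  then have "opt_cost xs A \<in> {social_cost y xs | y. feasible A y}"
    unfolding opt_cost_def by (intro Min_in finite_feasible_social_costs)
  then show thesis
    using that by blast
qed

lemma opt_cost_pos:
  assumes "feasible A y\<^sub>0" "x \<in> set xs" "x' \<in> set xs" "x \<noteq> x'"
  shows "0 < opt_cost xs A"
  using opt_cost_attained[OF assms(1)] social_cost_pos[OF assms(2-4)] by metis

lemma strategyproofD:
  assumes "strategyproof f" "valid_instance xs A" "i < length xs"
  shows "agent_cost (f xs A) (xs ! i) \<le> agent_cost (f (xs[i := x']) A) (xs ! i)"
  using assms unfolding strategyproof_def by blast

lemma approx_ratio_lower_bound: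
  assumes "valid_instance xs A" "feasible A y" "0 < opt_cost xs A"
    and "0 \<le> c" "c \<le> social_cost (f xs A) xs"
  shows "ereal (c / social_cost y xs) \<le> approx_ratio f"
proof -
  have "c / social_cost y xs \<le> social_cost (f xs A) xs / opt_cost xs A"
    using assms opt_cost_le[OF assms(2), of xs] by (intro frac_le) auto
  also have "ereal (social_cost (f xs A) xs / opt_cost xs A)
      = inst_ratio (social_cost (f xs A) xs) (opt_cost xs A)"
    using assms(3) by (simp add: inst_ratio_def)
  also have "\<dots> \<le> approx_ratio f"
    unfolding approx_ratio_def using assms(1) by (intro SUP_upper2[where i = "(xs, A)"]) auto
  finally show ?thesis
    by simp
qed

text \<open>Two copies of each point, so that both facilities may share a location.\<close>
definition twin_alternatives :: "real multiset" where
  "twin_alternatives = {#0, 0, 2, 2#}"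

lemma feasible_twin_alternatives_iff:
  "feasible twin_alternatives y \<longleftrightarrow> fst y \<in> {0, 2} \<and> snd y \<in> {0, 2}"
  by (cases y) (auto simp: feasible_def twin_alternatives_def)

lemma valid_instance_twin_alternatives: "valid_instance [a, b] twin_alternatives"
  by (simp add: valid_instance_def twin_alternatives_def)

lemma mechanism_outcome_twin_alternatives:
  assumes "is_mechanism f"
  shows "fst (f [a, b] twin_alternatives) \<in> {0, 2} \<and> snd (f [a, b] twin_alternatives) \<in> {0, 2}"
  using assms valid_instance_twin_alternatives
  unfolding is_mechanism_def feasible_twin_alternatives_iff[symmetric] by blast

lemma approx_ratio_ge_if_both_at_2:
  assumes "is_mechanism f" "strategyproof f" "0 < t" "t < 1"
    and "f [1 - t, 1 + t] twin_alternatives = (2, 2)"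
  shows "ereal ((3 - t) / (1 + t)) \<le> approx_ratio f"
proof -
  let ?y = "f [0, 1 + t] twin_alternatives"
  have "agent_cost (f [1 - t, 1 + t] twin_alternatives) (1 - t) \<le> agent_cost ?y (1 - t)"
    using strategyproofD[OF assms(2) valid_instance_twin_alternatives, of 0 _ _ 0] by simp
  then have "?y \<noteq> (0, 0)"
    using assms(3-5) by (auto simp: agent_cost_def)
  then have "3 - t \<le> social_cost ?y [0, 1 + t]"
    using mechanism_outcome_twin_alternatives[OF assms(1), of 0 "1 + t"] assms(3,4)
    by (cases ?y) (auto simp: social_cost_eq_sum_list agent_cost_def)
  moreover have "0 < opt_cost [0, 1 + t] twin_alternatives"
    using assms(3) by (intro opt_cost_pos[where y\<^sub>0 = "(0, 0)" and x = 0 and x' = "1 + t"])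
      (auto simp: feasible_twin_alternatives_iff)
  ultimately have "ereal ((3 - t) / social_cost (0, 0) [0, 1 + t]) \<le> approx_ratio f"
    using assms(4) valid_instance_twin_alternatives
    by (intro approx_ratio_lower_bound) (auto simp: feasible_twin_alternatives_iff)
  also have "social_cost (0, 0) [0, 1 + t] = 1 + t"
    using assms(3) by (simp add: social_cost_eq_sum_list agent_cost_def)
  finally show ?thesis .
qed

lemma approx_ratio_ge_if_not_both_at_2:
  assumes "is_mechanism f" "strategyproof f" "0 < t" "t < 1"
    and "f [1 - t, 1 + t] twin_alternatives \<noteq> (2, 2)"
  shows "ereal ((3 - t) / (1 + t)) \<le> approx_ratio f"
proof -
  let ?y = "f [1 - t, 2] twin_alternatives"
  have "agent_cost (f [1 - t, 1 + t] twin_alternatives) (1 + t) \<le> agent_cost ?y (1 + t)"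
    using strategyproofD[OF assms(2) valid_instance_twin_alternatives, of 1 _ _ 2] by simp
  moreover have "agent_cost (f [1 - t, 1 + t] twin_alternatives) (1 + t) = 1 + t"
    using mechanism_outcome_twin_alternatives[OF assms(1), of "1 - t" "1 + t"] assms(3-5)
    by (cases "f [1 - t, 1 + t] twin_alternatives") (auto simp: agent_cost_def)
  ultimately have "?y \<noteq> (2, 2)"
    using assms(3) by (auto simp: agent_cost_def)
  then have "3 - t \<le> social_cost ?y [1 - t, 2]"
    using mechanism_outcome_twin_alternatives[OF assms(1), of "1 - t" 2] assms(3,4)
    by (cases ?y) (auto simp: social_cost_eq_sum_list agent_cost_def)
  moreover have "0 < opt_cost [1 - t, 2] twin_alternatives"
    using assms(3) by (intro opt_cost_pos[where y\<^sub>0 = "(2, 2)" and x = "1 - t" and x' = 2])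
      (auto simp: feasible_twin_alternatives_iff)
  ultimately have "ereal ((3 - t) / social_cost (2, 2) [1 - t, 2]) \<le> approx_ratio f"
    using assms(4) valid_instance_twin_alternatives
    by (intro approx_ratio_lower_bound) (auto simp: feasible_twin_alternatives_iff)
  also have "social_cost (2, 2) [1 - t, 2] = 1 + t"
    using assms(3) by (simp add: social_cost_eq_sum_list agent_cost_def)
  finally show ?thesis .
qed

lemma ereal_ge_limit_at_right:
  fixes g :: "real \<Rightarrow> real" and r :: ereal
  assumes "(g \<longlongrightarrow> L) (at_right a)" "\<And>t. a < t \<Longrightarrow> t < b \<Longrightarrow> ereal (g t) \<le> r" "a < b"
  shows "ereal L \<le> r"
proof (rule tendsto_le[OF trivial_limit_at_right_real tendsto_const])
  show "((\<lambda>t. ereal (g t)) \<longlongrightarrow> ereal L) (at_right a)"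
    using assms(1) by (rule tendsto_ereal)
  show "\<forall>\<^sub>F t in at_right a. ereal (g t) \<le> r"
    using eventually_at_right_real[OF assms(3)] by eventually_elim (auto intro: assms(2))
qed

theorem theorem1:
  fixes f :: "real list \<Rightarrow> real multiset \<Rightarrow> real \<times> real"
  assumes "is_mechanism f" and "strategyproof f"
  shows "approx_ratio f \<ge> 3"
proof -
  have "((\<lambda>t. (3 - t) / (1 + t)) \<longlongrightarrow> (3 - 0) / (1 + 0)) (at_right (0 :: real))"
    by (intro tendsto_intros) auto
  then have limit: "((\<lambda>t. (3 - t) / (1 + t)) \<longlongrightarrow> 3) (at_right (0 :: real))"
    by simp
  have "ereal ((3 - t) / (1 + t)) \<le> approx_ratio f" if "0 < t" "t < 1" for t
    using approx_ratio_ge_if_both_at_2[OF assms that] approx_ratio_ge_if_not_both_at_2[OF assms that]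
    by blast
  from ereal_ge_limit_at_right[OF limit this zero_less_one] show ?thesis
    by simp
qed

end
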